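(* Let $X_n$ be the final altitude of a uniformly random Dyck meander with catastrophes of length $n$. Then $X_n$ admits a geometric limit distribution: $\Pr(X_n=k)\sim(1-\lambda)\lambda^k$, where $\lambda=v_1(\rho_0)^{-1}\approx0.6823278$ is the unique real positive root of $\lambda^3+\lambda-1$, namely $\lambda=\frac16\big(108+12\sqrt{93}\big)^{1/3}-2\big(108+12\sqrt{93}\big)^{-1/3}$.
   Context: Dyck paths with catastrophes: paths starting at altitude $0$, never going below $0$, with steps $+1$, $-1$, and catastrophes (a step from an altitude $h\ge2$ directly to altitude $0$); meanders may end at any altitude; length = number of steps; the final altitude is the altitude of the endpoint. Here $v_1(z)=\frac{1+\sqrt{1-4z^2}}{2z}$ is the large root of $1-z(u^{-1}+u)=0$, and $\rho_0\approx0.46557$ is the unique positive root of $\rho_0^3+2\rho_0^2+\rho_0-1$. *)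

theory Defs
  imports Complex_Main
begin

datatype step = Up | Down | Cat

fun walk :: "nat \<Rightarrow> step list \<Rightarrow> nat option" where
  "walk h [] = Some h"
| "walk h (Up # s) = walk (Suc h) s"
| "walk h (Down # s) = (if h \<ge> 1 then walk (h - 1) s else None)"
| "walk h (Cat # s) = (if h \<ge> 2 then walk 0 s else None)"

definition meanders :: "nat \<Rightarrow> step list set" where
  "meanders n = {w. length w = n \<and> walk 0 w \<noteq> None}"

definition final_alt_prob :: "nat \<Rightarrow> nat \<Rightarrow> real" where
  "final_alt_prob n k =
     real (card {w \<in> meanders n. walk 0 w = Some k}) / real (card (meanders n))"

definition v1 :: "real \<Rightarrow> real" where
  "v1 z = (1 + sqrt (1 - 4 * z^2)) / (2 * z)"

definition rho0 :: real where
  "rho0 = (THE r. r > 0 \<and> r^3 + 2 * r^2 + r - 1 = 0)"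

end

theory Submission
  imports Defs "HOL-Analysis.Analysis" "HOL-Library.Diagonal_Subsequence"
begin

text \<open>Cutting a meander at its first catastrophe gives the renewal equation
  \<open>C(n,k) = D(n,k) + \<Sum>\<^sub>j G(j) C(n-1-j,k)\<close>, where \<open>C\<close> and \<open>D\<close> count the meanders of
  length \<open>n\<close> and final altitude \<open>k\<close> with and without catastrophes, and \<open>G(j)\<close> counts the
  catastrophe-free meanders of length \<open>j\<close> ending at altitude at least 2.
  At \<open>\<rho> = \<lambda>^2 = \<rho>\<^sub>0\<close> the generating functions of catastrophe-free meanders are explicit:
  \<open>\<Sum>\<^sub>n D(n,k) \<rho>^n = \<lambda>^(k-1)\<close> and \<open>\<Sum>\<^sub>n \<Sum>\<^sub>k D(n,k) \<rho>^n = 1/(\<lambda>(1-\<lambda>))\<close>. Hence the weights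
  \<open>\<rho>^m G(m-1)\<close> form a probability law, positive for \<open>m \<ge> 3\<close> and with an exponential tail.
  The renewal theorem for such a law (Erdos-Feller-Pollard) gives
  \<open>\<rho>^n C(n,k) \<rightarrow> \<lambda>^(k-1)/\<mu>\<close> and \<open>\<rho>^n \<Sum>\<^sub>k C(n,k) \<rightarrow> 1/(\<lambda>(1-\<lambda>)\<mu>)\<close>, with \<open>\<mu>\<close> the mean
  of the law; the ratio of the two limits is \<open>(1-\<lambda>)\<lambda>^k\<close>.\<close>

section \<open>The real root of the cubic\<close>

lemma cardano_root:
  fixes lam :: real
  defines "lam \<equiv> root 3 (108 + 12 * sqrt 93) / 6 - 2 / root 3 (108 + 12 * sqrt 93)"
  shows "lam > 0" "lam^3 + lam - 1 = 0"
proof -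
  define a where "a = root 3 (108 + 12 * sqrt 93)"
  have a3: "a^3 = 108 + 12 * sqrt 93"
    unfolding a_def by (subst real_root_pow_pos2) auto
  have "9 < sqrt 93" by (rule real_less_rsqrt) simp
  hence "6^3 < a^3" using a3 by simp
  hence a6: "6 < a" by (rule power_less_imp_less_base) (simp add: a_def)
  have lam_a: "lam = (a^2 - 12) / (6 * a)"
    unfolding lam_def a_def[symmetric] using a6 by (simp add: field_simps power2_eq_square)
  have "a^6 - 216 * a^3 - 1728 = 0"
  proof -
    have "a^6 = (a^3)^2" by (simp flip: power_mult)
    thus ?thesis unfolding a3 by (simp add: power2_eq_square algebra_simps)
  qed
  moreover have "216 * a^3 * (lam^3 + lam - 1) = a^6 - 216 * a^3 - 1728"
    unfolding lam_a using a6
    by (simp add: field_simps power_divide power_mult_distrib) (simp add: algebra_simps eval_nat_numeral)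
  ultimately show "lam^3 + lam - 1 = 0" using a6 by simp
  have "6^2 < a^2" using a6 by (intro power_strict_mono) auto
  thus "lam > 0" unfolding lam_a using a6 by simp
qed

lemma cubic_root_unique:
  fixes x y :: real
  assumes "x > 0" "y > 0" "x^3 + x - 1 = 0" "y^3 + y - 1 = 0"
  shows "x = y"
proof (rule ccontr)
  assume "x \<noteq> y"
  hence "x < y \<or> y < x" by linarith
  moreover have "x^3 < y^3" if "x < y" using that assms by (intro power_strict_mono) auto
  moreover have "y^3 < x^3" if "y < x" using that assms by (intro power_strict_mono) auto
  ultimately show False using assms by linarith
qed

locale cubic_root =
  fixes l :: real
  assumes pos: "l > 0" and cubic: "l^3 + l - 1 = 0"
begin

lemma cube_eq: "l^3 = 1 - l"
  using cubic by simp

lemma lt_one: "l < 1"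
  using pos cube_eq by (smt (verit) zero_less_power)

lemma gt_half: "l > 1/2"
proof (rule ccontr)
  assume "\<not> l > 1/2"
  hence "l^3 \<le> (1/2)^3" using pos by (intro power_mono) auto
  thus False using cube_eq \<open>\<not> l > 1/2\<close> by (simp add: power_divide)
qed

lemma two_sq_lt_one: "2 * l^2 < 1"
proof (rule ccontr)
  assume "\<not> 2 * l^2 < 1"
  hence "l / 2 \<le> l * l^2" using pos by (simp add: mult_left_mono)
  hence "l \<le> 2/3" using cube_eq by (simp add: power3_eq_cube power2_eq_square)
  hence "l^2 \<le> (2/3)^2" using pos by (intro power_mono) auto
  thus False using \<open>\<not> 2 * l^2 < 1\<close> by (simp add: power2_eq_square)
qed

lemma rho0_eq: "rho0 = l^2"
  unfolding rho0_def
proof (rule the_equality)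
  have "(l^2)^3 + 2*(l^2)^2 + l^2 - 1 = (l^3 + l + 1) * (l^3 + l - 1)"
    by (simp add: algebra_simps eval_nat_numeral)
  thus "l^2 > 0 \<and> (l^2)^3 + 2*(l^2)^2 + l^2 - 1 = 0" using pos cubic by simp
  fix r :: real
  assume r: "r > 0 \<and> r^3 + 2*r^2 + r - 1 = 0"
  show "r = l^2"
  proof (rule ccontr)
    have mono: "a^3 + 2*a^2 + a < b^3 + 2*b^2 + b" if "0 < a" "a < b" for a b :: real
    proof -
      have "a^3 < b^3" "a^2 < b^2" using that by (auto intro!: power_strict_mono)
      thus ?thesis using that by linarith
    qed
    assume "r \<noteq> l^2"
    hence "r < l^2 \<or> l^2 < r" by linarith
    thus False using mono[of r "l^2"] mono[of "l^2" r] r \<open>l^2 > 0 \<and> _\<close> by auto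
  qed
qed

lemma inverse_v1_rho0: "inverse (v1 rho0) = l"
proof -
  have "(l^2)^2 = l * l^3" by (simp add: eval_nat_numeral)
  hence "1 - 4 * (l^2)^2 = (2*l - 1)^2"
    using cube_eq by (simp add: power2_eq_square algebra_simps)
  hence "sqrt (1 - 4 * (l^2)^2) = 2*l - 1" using gt_half by simp
  hence "v1 (l^2) = 1 / l" unfolding v1_def using pos by (simp add: field_simps power2_eq_square)
  thus ?thesis by (simp add: rho0_eq)
qed

end

section \<open>Counting by the first catastrophe\<close>

fun dyck_count :: "nat \<Rightarrow> nat \<Rightarrow> nat" where
  "dyck_count 0 k = (if k = 0 then 1 else 0)"
| "dyck_count (Suc n) k = (if k \<ge> 1 then dyck_count n (k-1) else 0) + dyck_count n (Suc k)"

fun cat_count :: "nat \<Rightarrow> nat \<Rightarrow> nat" where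
  "cat_count 0 k = (if k = 0 then 1 else 0)"
| "cat_count (Suc n) k = (if k \<ge> 1 then cat_count n (k-1) else 0) + cat_count n (Suc k)
     + (if k = 0 then (\<Sum>h\<in>{2..n}. cat_count n h) else 0)"

definition dyck_total :: "nat \<Rightarrow> nat" where
  "dyck_total n = (\<Sum>k\<le>n. dyck_count n k)"

definition cat_total :: "nat \<Rightarrow> nat" where
  "cat_total n = (\<Sum>k\<le>n. cat_count n k)"

definition cat_ready_count :: "nat \<Rightarrow> nat" where
  "cat_ready_count j = (\<Sum>h\<in>{2..j}. dyck_count j h)"

text \<open>Meanders with at least one catastrophe, split at the first one, taken as step \<open>j + 1\<close>.\<close>
definition after_cat_count :: "nat \<Rightarrow> nat \<Rightarrow> nat" where
  "after_cat_count n k = (\<Sum>j<n. cat_ready_count j * cat_count (n - Suc j) k)"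

lemma dyck_count_eq_0: "n < k \<Longrightarrow> dyck_count n k = 0"
  by (induction n arbitrary: k) auto

lemma cat_count_eq_0: "n < k \<Longrightarrow> cat_count n k = 0"
  by (induction n arbitrary: k) auto

lemma dyck_count_le: "dyck_count n k \<le> 2^n"
proof (induction n arbitrary: k)
  case (Suc n)
  show ?case using Suc[of "k-1"] Suc[of "Suc k"] by simp
qed simp

lemma dyck_count_diag: "dyck_count n n = 1"
  by (induction n) (auto simp: dyck_count_eq_0)

lemma dyck_total_Suc: "dyck_total (Suc n) + dyck_count n 0 = 2 * dyck_total n"
proof -
  have up: "(\<Sum>k\<le>Suc n. if k \<ge> 1 then dyck_count n (k-1) else 0) = dyck_total n"
    unfolding dyck_total_def by (subst sum.atMost_Suc_shift) simp
  have "dyck_total n = dyck_count n 0 + (\<Sum>k<n. dyck_count n (Suc k))"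
    unfolding dyck_total_def by (rule sum.atMost_shift)
  also have "(\<Sum>k<n. dyck_count n (Suc k)) = (\<Sum>k\<le>Suc n. dyck_count n (Suc k))"
    by (rule sum.mono_neutral_left) (auto simp: dyck_count_eq_0)
  finally have down: "(\<Sum>k\<le>Suc n. dyck_count n (Suc k)) + dyck_count n 0 = dyck_total n"
    by simp
  show ?thesis
    using up down by (simp add: dyck_total_def sum.distrib)
qed

lemma dyck_total_le: "dyck_total n \<le> 2^n"
proof (induction n)
  case (Suc n)
  show ?case using Suc dyck_total_Suc[of n] by simp
qed (simp add: dyck_total_def)

text \<open>Split at the last visit to altitude \<open>k\<close>: after the following up-step comes
  a Dyck excursion.\<close>
lemma dyck_count_Suc_Suc:
  "dyck_count (Suc n) (Suc k) = (\<Sum>a\<le>n. dyck_count a k * dyck_count (n - a) 0)"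
proof (induction n arbitrary: k)
  case (Suc n)
  have "(\<Sum>a\<le>Suc n. dyck_count a k * dyck_count (Suc n - a) 0)
      = dyck_count 0 k * dyck_count (Suc n) 0
        + (\<Sum>a\<le>n. (if k \<ge> 1 then dyck_count a (k-1) else 0) * dyck_count (n - a) 0)
        + (\<Sum>a\<le>n. dyck_count a (Suc k) * dyck_count (n - a) 0)"
    by (subst sum.atMost_Suc_shift) (simp add: sum.distrib algebra_simps)
  then show ?case
    using Suc[of "Suc 0"] Suc[of "k - 1"] Suc[of "Suc k"] by (cases k) simp_all
qed simp

lemma dyck_total_split: "dyck_total j = dyck_count j 0 + dyck_count j 1 + cat_ready_count j"
proof (cases j)
  case (Suc m)
  have "{..Suc m} = {0, 1} \<union> {2..Suc m}" by auto
  then show ?thesis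
    unfolding dyck_total_def cat_ready_count_def Suc by (simp add: sum.union_disjoint)
qed (simp add: dyck_total_def cat_ready_count_def)

lemma after_cat_count_Suc:
  "after_cat_count (Suc n) k
     = cat_ready_count n * cat_count 0 k
       + (\<Sum>j<n. cat_ready_count j * cat_count (Suc (n - Suc j)) k)"
  unfolding after_cat_count_def by (simp add: Suc_diff_Suc add.commute)

lemma after_cat_count_Suc_Suc:
  "after_cat_count (Suc n) (Suc k) = after_cat_count n k + after_cat_count n (Suc (Suc k))"
proof -
  have "(\<Sum>j<n. cat_ready_count j * cat_count (Suc (n - Suc j)) (Suc k))
      = (\<Sum>j<n. cat_ready_count j * cat_count (n - Suc j) k
              + cat_ready_count j * cat_count (n - Suc j) (Suc (Suc k)))"
    by (simp add: distrib_left)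
  also have "\<dots> = after_cat_count n k + after_cat_count n (Suc (Suc k))"
    unfolding after_cat_count_def by (rule sum.distrib)
  finally show ?thesis using after_cat_count_Suc[of n "Suc k"] by simp
qed

lemma after_cat_count_Suc_0:
  "after_cat_count (Suc n) 0 = cat_ready_count n + after_cat_count n 1
     + (\<Sum>j<n. cat_ready_count j * (\<Sum>h\<in>{2..n}. cat_count (n - Suc j) h))"
proof -
  have "(\<Sum>h\<in>{2..n}. cat_count (n - Suc j) h) = (\<Sum>h\<in>{2..n - Suc j}. cat_count (n - Suc j) h)"
    for j by (rule sum.mono_neutral_right) (auto simp: cat_count_eq_0)
  hence "(\<Sum>j<n. cat_ready_count j * cat_count (Suc (n - Suc j)) 0)
      = (\<Sum>j<n. cat_ready_count j * cat_count (n - Suc j) 1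
              + cat_ready_count j * (\<Sum>h\<in>{2..n}. cat_count (n - Suc j) h))"
    by (simp add: distrib_left)
  also have "\<dots> = after_cat_count n 1
      + (\<Sum>j<n. cat_ready_count j * (\<Sum>h\<in>{2..n}. cat_count (n - Suc j) h))"
    unfolding after_cat_count_def by (rule sum.distrib)
  finally show ?thesis using after_cat_count_Suc[of n 0] by simp
qed

lemma cat_count_first_cat: "cat_count n k = dyck_count n k + after_cat_count n k"
proof (induction n arbitrary: k)
  case 0
  show ?case by (simp add: after_cat_count_def)
next
  case (Suc n)
  show ?case
  proof (cases k)
    case 0
    have "(\<Sum>h\<in>{2..n}. cat_count n h) = cat_ready_count n + (\<Sum>h\<in>{2..n}. after_cat_count n h)"
      using Suc.IH by (simp add: sum.distrib cat_ready_count_def)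
    also have "(\<Sum>h\<in>{2..n}. after_cat_count n h)
        = (\<Sum>j<n. cat_ready_count j * (\<Sum>h\<in>{2..n}. cat_count (n - Suc j) h))"
      unfolding after_cat_count_def by (simp add: sum.swap[of _ "{2..n}"] sum_distrib_left)
    finally show ?thesis using 0 Suc.IH[of 1] after_cat_count_Suc_0[of n] by simp
  next
    case (Suc k')
    then show ?thesis
      using Suc.IH[of k'] Suc.IH[of "Suc (Suc k')"] after_cat_count_Suc_Suc[of n k'] by simp
  qed
qed

lemma cat_total_first_cat:
  "cat_total n = dyck_total n + (\<Sum>j<n. cat_ready_count j * cat_total (n - Suc j))"
proof -
  have "cat_total n = dyck_total n + (\<Sum>k\<le>n. after_cat_count n k)"
    unfolding cat_total_def dyck_total_def by (simp add: cat_count_first_cat sum.distrib)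
  also have "(\<Sum>k\<le>n. after_cat_count n k)
      = (\<Sum>j<n. cat_ready_count j * (\<Sum>k\<le>n. cat_count (n - Suc j) k))"
    unfolding after_cat_count_def by (simp add: sum.swap[of _ "{..n}"] sum_distrib_left)
  also have "\<dots> = (\<Sum>j<n. cat_ready_count j * cat_total (n - Suc j))"
    unfolding cat_total_def
    by (intro sum.cong refl arg_cong2[where f="(*)"] sum.mono_neutral_right)
       (auto simp: cat_count_eq_0)
  finally show ?thesis .
qed

lemma scaled_renewal_eq:
  fixes x :: real and a b c :: "nat \<Rightarrow> nat"
  assumes "a n = b n + (\<Sum>j<n. c j * a (n - Suc j))"
  shows "x^n * a n = x^n * b n + (\<Sum>j<n. (x^Suc j * c j) * (x^(n - Suc j) * a (n - Suc j)))"
proof -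
  have shift: "x^n * (real (c j) * real (a (n - Suc j)))
      = (x^Suc j * real (c j)) * (x^(n - Suc j) * real (a (n - Suc j)))" if "j < n" for j
  proof -
    have "Suc j + (n - Suc j) = n" using that by simp
    hence "x^n = x^Suc j * x^(n - Suc j)" by (metis power_add)
    thus ?thesis by (simp only: mult_ac)
  qed
  have "x^n * (\<Sum>j<n. real (c j) * real (a (n - Suc j)))
      = (\<Sum>j<n. (x^Suc j * real (c j)) * (x^(n - Suc j) * real (a (n - Suc j))))"
    unfolding sum_distrib_left by (intro sum.cong refl shift) simp
  moreover have "real (a n) = real (b n) + (\<Sum>j<n. real (c j) * real (a (n - Suc j)))"
    using arg_cong[OF assms, of real] by simp
  ultimately show ?thesis by (simp add: distrib_left)
qed

section \<open>Meanders as step lists\<close>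

lemma walk_append:
  "walk h (w @ v) = (case walk h w of None \<Rightarrow> None | Some h' \<Rightarrow> walk h' v)"
proof (induction w arbitrary: h)
  case (Cons s w)
  then show ?case by (cases s) auto
qed simp

lemma walk_Some_le: "walk h w = Some k \<Longrightarrow> k \<le> h + length w"
proof (induction w arbitrary: h)
  case (Cons s w)
  then show ?case by (cases s) (fastforce split: if_splits)+
qed simp

lemma finite_lists_length_step: "finite {w :: step list. length w = n}"
proof -
  have "finite (UNIV :: step set)"
    using step.exhaust by (metis (full_types) finite.simps insertCI UNIV_eq_I)
  from finite_lists_length_eq[OF this, of n] show ?thesis by simp
qed

definition meanders_to :: "nat \<Rightarrow> nat \<Rightarrow> step list set" where
  "meanders_to n k = {w. length w = n \<and> walk 0 w = Some k}"

lemma finite_meanders_to: "finite (meanders_to n k)"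
  unfolding meanders_to_def by (rule finite_subset[OF _ finite_lists_length_step[of n]]) auto

lemma meanders_to_disjoint: "h \<noteq> h' \<Longrightarrow> meanders_to n h \<inter> meanders_to n h' = {}"
  unfolding meanders_to_def by auto

lemma meanders_to_Suc:
  "meanders_to (Suc n) k =
     (\<lambda>w. w @ [Up]) ` (if k \<ge> 1 then meanders_to n (k-1) else {})
   \<union> (\<lambda>w. w @ [Down]) ` meanders_to n (Suc k)
   \<union> (\<lambda>w. w @ [Cat]) ` (if k = 0 then (\<Union>h\<in>{2..n}. meanders_to n h) else {})"
    (is "_ = ?U \<union> ?D \<union> ?C")
proof (intro equalityI subsetI)
  fix x assume "x \<in> meanders_to (Suc n) k"
  then obtain s w where x: "x = w @ [s]" "length w = n" and wk: "walk 0 x = Some k"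
    unfolding meanders_to_def by (auto simp: length_Suc_conv_rev)
  then obtain h where h: "walk 0 w = Some h"
    by (cases "walk 0 w") (auto simp: walk_append)
  have "walk h [s] = Some k" using wk h x by (simp add: walk_append)
  moreover have "h \<le> n" using walk_Some_le[OF h] x by simp
  ultimately show "x \<in> ?U \<union> ?D \<union> ?C"
    using h x by (cases s) (auto simp: meanders_to_def split: if_splits)
next
  fix x assume "x \<in> ?U \<union> ?D \<union> ?C"
  then show "x \<in> meanders_to (Suc n) k"
    by (auto simp: meanders_to_def walk_append split: if_splits)
qed

lemma card_meanders_to: "card (meanders_to n k) = cat_count n k"
proof (induction n arbitrary: k)
  case 0
  have "meanders_to 0 k = (if k = 0 then {[]} else {})" unfolding meanders_to_def by auto
  then show ?case by simp
next
  case (Suc n)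
  have card_snoc: "card ((\<lambda>w. w @ [s]) ` A) = card A" for s :: step and A
    by (rule card_image) (simp add: inj_on_def)
  have "card (\<Union>h\<in>{2..n}. meanders_to n h) = (\<Sum>h\<in>{2..n}. cat_count n h)"
    by (simp add: card_UN_disjoint finite_meanders_to meanders_to_disjoint Suc.IH)
  then show ?case
    unfolding meanders_to_Suc
    by (subst card_Un_disjoint; auto simp: finite_meanders_to card_snoc Suc.IH)+
qed

lemma card_meanders: "card (meanders n) = cat_total n"
proof -
  have "meanders n = (\<Union>k\<le>n. meanders_to n k)"
    unfolding meanders_def meanders_to_def using walk_Some_le by fastforce
  hence "card (meanders n) = (\<Sum>k\<le>n. card (meanders_to n k))"
    by (simp add: card_UN_disjoint finite_meanders_to meanders_to_disjoint)
  thus ?thesis by (simp add: card_meanders_to cat_total_def)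
qed

lemma final_alt_prob_eq: "final_alt_prob n k = real (cat_count n k) / real (cat_total n)"
proof -
  have "{w \<in> meanders n. walk 0 w = Some k} = meanders_to n k"
    unfolding meanders_def meanders_to_def by auto
  thus ?thesis unfolding final_alt_prob_def card_meanders by (simp add: card_meanders_to)
qed

section \<open>A discrete renewal theorem\<close>

lemma tannery_sequentially:
  fixes a :: "nat \<Rightarrow> nat \<Rightarrow> real"
  assumes "\<And>k. (\<lambda>n. a k n) \<longlonglongrightarrow> b k" and "\<And>k n. \<bar>a k n\<bar> \<le> M k" and "summable M"
  shows "(\<lambda>n. \<Sum>k. a k n) \<longlonglongrightarrow> (\<Sum>k. b k)"
proof -
  have "eventually (\<lambda>(k,n). norm (a k n) \<le> M k) (at_top \<times>\<^sub>F sequentially)"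
    using assms(2) by (intro always_eventually) auto
  from tannerys_theorem[OF assms(1) this assms(3)] show ?thesis by simp
qed

lemma bounded_convergent_subseq:
  fixes x :: "nat \<Rightarrow> real"
  assumes "\<And>n. \<bar>x n\<bar> \<le> B"
  shows "\<exists>r. strict_mono r \<and> (\<exists>l. (\<lambda>i. x (r i)) \<longlonglongrightarrow> l)"
proof -
  obtain r where r: "strict_mono r" "monoseq (\<lambda>n. x (r n))" using seq_monosub by blast
  have "Bseq (\<lambda>n. x (r n))" using assms by (intro BseqI'[of _ B]) auto
  hence "convergent (\<lambda>n. x (r n))" using r by (intro Bseq_monoseq_convergent)
  thus ?thesis using r by (auto simp: convergent_def)
qed

lemma shifted_subseq_limits:
  fixes u :: "nat \<Rightarrow> real"
  assumes bound: "\<And>n. \<bar>u n\<bar> \<le> B"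
    and \<sigma>: "strict_mono \<sigma>" and lim: "(\<lambda>i. u (\<sigma> i)) \<longlonglongrightarrow> L"
  obtains \<tau> Lm where "strict_mono \<tau>" "\<And>m. (\<lambda>i. u (\<tau> i - m)) \<longlonglongrightarrow> Lm m" "Lm 0 = L"
    "\<And>m. \<bar>Lm m\<bar> \<le> B"
proof -
  interpret subseqs "\<lambda>m t. \<exists>l. (\<lambda>i. u (\<sigma> (t i) - m)) \<longlonglongrightarrow> l"
  proof
    fix m and t :: "nat \<Rightarrow> nat"
    obtain r where "strict_mono r" "\<exists>l. (\<lambda>i. u (\<sigma> (t (r i)) - m)) \<longlonglongrightarrow> l"
      using bounded_convergent_subseq[of "\<lambda>i. u (\<sigma> (t i) - m)" B] bound by blast
    thus "\<exists>r. strict_mono r \<and> (\<exists>l. (\<lambda>i. u (\<sigma> ((t \<circ> r) i) - m)) \<longlonglongrightarrow> l)" by auto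
  qed
  have diag: "\<exists>l. (\<lambda>i. u (\<sigma> (diagseq i) - m)) \<longlonglongrightarrow> l" for m
  proof -
    obtain l where "(\<lambda>i. u (\<sigma> ((diagseq \<circ> (+) (Suc m)) i) - m)) \<longlonglongrightarrow> l"
    proof (atomize_elim, rule diagseq_holds)
      fix r :: "nat \<Rightarrow> nat" and t n
      assume "strict_mono r" "\<exists>l. (\<lambda>i. u (\<sigma> (t i) - n)) \<longlonglongrightarrow> l"
      then obtain l where "(\<lambda>i. u (\<sigma> (t i) - n)) \<longlonglongrightarrow> l" by blast
      from LIMSEQ_subseq_LIMSEQ[OF this \<open>strict_mono r\<close>]
      show "\<exists>l. (\<lambda>i. u (\<sigma> ((t \<circ> r) i) - n)) \<longlonglongrightarrow> l" by (auto simp: o_def)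
    qed
    hence "(\<lambda>i. u (\<sigma> (diagseq (i + Suc m)) - m)) \<longlonglongrightarrow> l" by (simp add: o_def add.commute)
    hence "(\<lambda>i. u (\<sigma> (diagseq i) - m)) \<longlonglongrightarrow> l" by (rule LIMSEQ_offset)
    thus ?thesis ..
  qed
  define \<tau> where "\<tau> = \<sigma> \<circ> diagseq"
  define Lm where "Lm m = lim (\<lambda>i. u (\<tau> i - m))" for m
  have \<tau>: "strict_mono \<tau>" unfolding \<tau>_def using \<sigma> subseq_diagseq by (rule strict_mono_o)
  have Lm: "(\<lambda>i. u (\<tau> i - m)) \<longlonglongrightarrow> Lm m" for m
    using diag[of m] unfolding Lm_def \<tau>_def by (auto simp: convergent_LIMSEQ_iff[symmetric] convergent_def)
  have "(\<lambda>i. u (\<tau> i)) \<longlonglongrightarrow> L"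
    using LIMSEQ_subseq_LIMSEQ[OF lim subseq_diagseq] by (simp add: \<tau>_def o_def)
  hence "Lm 0 = L" using Lm[of 0] LIMSEQ_unique by auto
  moreover have "\<bar>Lm m\<bar> \<le> B" for m
    using tendsto_le[OF _ tendsto_const tendsto_rabs[OF Lm[of m]]] bound by simp
  ultimately show ?thesis using that \<tau> Lm by blast
qed

lemma shifted_subseq_limit:
  fixes \<tau> :: "nat \<Rightarrow> nat" and m :: nat
  assumes \<tau>: "strict_mono \<tau>" and lim: "(\<lambda>i. u (\<tau> i - m)) \<longlonglongrightarrow> l"
  shows "\<exists>\<tau>'. strict_mono \<tau>' \<and> (\<lambda>i. u (\<tau>' i)) \<longlonglongrightarrow> l"
proof (intro exI conjI)
  show "strict_mono (\<lambda>i. \<tau> (i + m) - m)"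
  proof (rule strict_monoI_Suc)
    fix i
    have "\<tau> (i + m) < \<tau> (Suc i + m)" using \<tau> by (simp add: strict_mono_Suc_iff)
    moreover have "m \<le> \<tau> (i + m)" using seq_suble[OF \<tau>, of "i + m"] by simp
    ultimately show "\<tau> (i + m) - m < \<tau> (Suc i + m) - m" by simp
  qed
  show "(\<lambda>i. u (\<tau> (i + m) - m)) \<longlonglongrightarrow> l"
    using LIMSEQ_ignore_initial_segment[OF lim, of m] by simp
qed

lemma shifted_limits_harmonic:
  fixes f q u Lm :: "nat \<Rightarrow> real"
  assumes f_nn: "\<And>m. f m \<ge> 0" and f_summable: "summable f" and q_lim: "q \<longlonglongrightarrow> 0"
    and bound: "\<And>n. \<bar>u n\<bar> \<le> B"
    and u_eq: "\<And>n. u n = q n + (\<Sum>j<n. f (Suc j) * u (n - Suc j))"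
    and \<tau>: "strict_mono \<tau>" and lim: "\<And>m. (\<lambda>i. u (\<tau> i - m)) \<longlonglongrightarrow> Lm m"
  shows "Lm m = (\<Sum>j. f (Suc j) * Lm (m + Suc j))"
proof -
  have B: "0 \<le> B" using bound[of 0] by linarith
  define a where "a j i = (if j < \<tau> i - m then f (Suc j) * u (\<tau> i - m - Suc j) else 0)" for j i
  have "(\<lambda>i. a j i) \<longlonglongrightarrow> f (Suc j) * Lm (m + Suc j)" for j
  proof (rule Lim_transform_eventually[OF tendsto_mult_left[OF lim]])
    show "\<forall>\<^sub>F i in sequentially. f (Suc j) * u (\<tau> i - (m + Suc j)) = a j i"
      unfolding eventually_sequentially a_def
      by (rule exI[of _ "Suc (m + j)"]) (auto dest: order_trans[OF _ seq_suble[OF \<tau>]])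
  qed
  moreover have "\<bar>a j i\<bar> \<le> f (Suc j) * B" for j i
    unfolding a_def using f_nn bound B by (auto simp: abs_mult intro: mult_left_mono)
  moreover have "summable (\<lambda>j. f (Suc j) * B)"
    using f_summable by (simp add: summable_Suc_iff summable_mult2)
  ultimately have "(\<lambda>i. \<Sum>j. a j i) \<longlonglongrightarrow> (\<Sum>j. f (Suc j) * Lm (m + Suc j))"
    by (rule tannery_sequentially)
  moreover have "(\<Sum>j. a j i) = u (\<tau> i - m) - q (\<tau> i - m)" for i
  proof -
    have "(\<Sum>j. a j i) = (\<Sum>j<\<tau> i - m. a j i)" by (rule suminf_finite) (auto simp: a_def)
    thus ?thesis using u_eq[of "\<tau> i - m"] by (simp add: a_def)
  qed
  moreover have "(\<lambda>i. q (\<tau> i - m)) \<longlonglongrightarrow> 0"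
  proof -
    have "(\<lambda>n. q (n - m)) \<longlonglongrightarrow> 0"
      by (rule filterlim_compose[OF q_lim filterlim_minus_const_nat_at_top])
    from LIMSEQ_subseq_LIMSEQ[OF this \<tau>] show ?thesis by (simp add: o_def)
  qed
  hence "(\<lambda>i. u (\<tau> i - m) - q (\<tau> i - m)) \<longlonglongrightarrow> Lm m"
    using tendsto_diff[OF lim] by fastforce
  ultimately show ?thesis using LIMSEQ_unique by auto
qed

text \<open>The maximum spreads from \<open>0\<close> to the support of \<open>f\<close>, which contains all large
  indices, and from there back down to every index through the harmonic equation.\<close>
lemma harmonic_max_const:
  fixes f h :: "nat \<Rightarrow> real"
  assumes f_nn: "\<And>m. f m \<ge> 0" and f_0: "f 0 = 0" and f_sums: "f sums 1"
    and f_pos: "\<forall>\<^sub>F m in sequentially. f m > 0"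
    and bound: "\<And>m. \<bar>h m\<bar> \<le> B"
    and harmonic: "\<And>m. h m = (\<Sum>j. f (Suc j) * h (m + Suc j))"
    and max: "\<And>m. h m \<le> h 0"
  shows "h m = h 0"
proof -
  have f_Suc_sums: "(\<lambda>j. f (Suc j)) sums 1" using f_sums f_0 by (simp add: sums_Suc_iff)
  have summable_shift: "summable (\<lambda>j. f (Suc j) * h (k + Suc j))" for k
    by (rule summable_comparison_test[OF _ summable_mult2[OF sums_summable[OF f_Suc_sums], of B]])
       (use f_nn bound in \<open>auto simp: abs_mult intro!: mult_left_mono\<close>)
  have at_support: "h n = h 0" if pos: "f n > 0" for n
  proof -
    have "(\<lambda>j. h 0 * f (Suc j) - f (Suc j) * h (Suc j)) sums (h 0 * 1 - h 0)"
      using harmonic[of 0] summable_shift[of 0]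
      by (intro sums_diff sums_mult f_Suc_sums) (simp_all add: summable_sums)
    hence sums0: "(\<lambda>j. f (Suc j) * (h 0 - h (Suc j))) sums 0" by (simp add: algebra_simps)
    have "0 \<le> f (Suc j) * (h 0 - h (Suc j))" for j using f_nn max by simp
    with sums0 have "f (Suc j) * (h 0 - h (Suc j)) = 0" for j
      using suminf_eq_zero_iff[OF sums_summable[OF sums0]] sums_unique[OF sums0] by auto
    moreover obtain j where "n = Suc j" using pos f_0 by (cases n) auto
    ultimately show ?thesis using pos by (metis less_irrefl mult_eq_0_iff right_minus_eq)
  qed
  obtain N where N: "\<And>m. m \<ge> N \<Longrightarrow> f m > 0"
    using f_pos unfolding eventually_sequentially by blast
  have "h m = h 0" if "m \<ge> N - d" for m d
    using that
  proof (induction d arbitrary: m)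
    case 0
    then show ?case using N at_support by simp
  next
    case (Suc d)
    show ?case
    proof (cases "m \<ge> N - d")
      case False
      hence "N - d \<le> m + Suc j" for j using Suc.prems by linarith
      hence "h (m + Suc j) = h 0" for j using Suc.IH by blast
      hence "h m = (\<Sum>j. f (Suc j) * h 0)" using harmonic[of m] by simp
      also have "\<dots> = h 0" using sums_unique[OF sums_mult2[OF f_Suc_sums, of "h 0"]] by simp
      finally show ?thesis .
    qed (use Suc.IH in simp)
  qed
  from this[where d = N] show ?thesis by simp
qed

lemma harmonic_extremum_const:
  fixes f h :: "nat \<Rightarrow> real"
  assumes f_nn: "\<And>m. f m \<ge> 0" and f_0: "f 0 = 0" and f_sums: "f sums 1"
    and f_pos: "\<forall>\<^sub>F m in sequentially. f m > 0"
    and bound: "\<And>m. \<bar>h m\<bar> \<le> B"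
    and harmonic: "\<And>m. h m = (\<Sum>j. f (Suc j) * h (m + Suc j))"
    and extremum: "(\<forall>m. h m \<le> h 0) \<or> (\<forall>m. h 0 \<le> h m)"
  shows "h m = h 0"
  using extremum
proof
  assume "\<forall>m. h 0 \<le> h m"
  have f_Suc: "summable (\<lambda>j. f (Suc j))" using f_sums by (simp add: summable_Suc_iff sums_summable)
  have "summable (\<lambda>j. f (Suc j) * h (m + Suc j))" for m
    by (rule summable_comparison_test[OF _ summable_mult2[OF f_Suc, of B]])
       (use f_nn bound in \<open>auto simp: abs_mult intro!: mult_left_mono\<close>)
  hence "- h m = (\<Sum>j. f (Suc j) * - h (m + Suc j))" for m
    by (subst harmonic) (simp add: suminf_minus)
  from harmonic_max_const[OF f_nn f_0 f_sums f_pos _ this, of B] bound \<open>\<forall>m. h 0 \<le> h m\<close>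
  show "h m = h 0" by simp
qed (use harmonic_max_const[OF assms(1-6)] in blast)

definition survival :: "(nat \<Rightarrow> real) \<Rightarrow> nat \<Rightarrow> real" where
  "survival f m = 1 - (\<Sum>j\<le>m. f j)"

lemma survival_eq_tail:
  fixes f :: "nat \<Rightarrow> real"
  assumes "f sums 1"
  shows "survival f m = (\<Sum>n. f (n + Suc m))"
  using suminf_split_initial_segment[OF sums_summable[OF assms], of "Suc m"] assms
  by (simp add: survival_def sums_iff lessThan_Suc_atMost)

lemma summable_survival_geometric:
  fixes f :: "nat \<Rightarrow> real" and \<theta> :: real
  assumes f_nn: "\<And>m. f m \<ge> 0" and f_sums: "f sums 1" and f_le: "\<And>m. f m \<le> \<theta>^m"
    and \<theta>: "\<theta> < 1"
  shows "summable (survival f)"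
proof (rule summable_comparison_test)
  have "0 \<le> \<theta>" using f_nn[of 1] f_le[of 1] by simp
  hence geometric: "summable (\<lambda>n. \<theta>^n)" using \<theta> by (simp add: summable_geometric)
  have tail: "summable (\<lambda>n. f (n + Suc m))" for m
    by (rule summable_iff_shift[THEN iffD2]) (rule sums_summable[OF f_sums])
  show "summable (\<lambda>m. (\<Sum>n. \<theta>^n) * \<theta>^Suc m)"
    using geometric by (intro summable_mult) (simp add: summable_Suc_iff)
  show "\<exists>N. \<forall>m\<ge>N. norm (survival f m) \<le> (\<Sum>n. \<theta>^n) * \<theta>^Suc m"
  proof (intro exI allI impI)
    fix m
    have "(\<Sum>n. f (n + Suc m)) \<le> (\<Sum>n. \<theta>^n * \<theta>^Suc m)"
    proof (rule suminf_le)
      show "f (n + Suc m) \<le> \<theta>^n * \<theta>^Suc m" for n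
        using f_le[of "n + Suc m"] by (simp only: power_add)
    qed (use tail geometric summable_mult2 in blast)+
    moreover have "0 \<le> (\<Sum>n. f (n + Suc m))" using tail f_nn by (intro suminf_nonneg) auto
    ultimately show "norm (survival f m) \<le> (\<Sum>n. \<theta>^n) * \<theta>^Suc m"
      using suminf_mult2[OF geometric] by (simp add: survival_eq_tail[OF f_sums])
  qed
qed

lemma survival_convolution_limit:
  fixes f q u :: "nat \<Rightarrow> real"
  assumes survival_nn: "\<And>m. survival f m \<ge> 0" and survival_summable: "summable (survival f)"
    and q_sums: "q sums Q" and bound: "\<And>n. \<bar>u n\<bar> \<le> B"
    and conv: "\<And>n. (\<Sum>m\<le>n. survival f m * u (n - m)) = (\<Sum>j\<le>n. q j)"
    and \<tau>: "strict_mono \<tau>" and lim: "\<And>m. (\<lambda>i. u (\<tau> i - m)) \<longlonglongrightarrow> L"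
  shows "L * (\<Sum>m. survival f m) = Q"
proof -
  have B: "0 \<le> B" using bound[of 0] by linarith
  define b where "b m i = (if m \<le> \<tau> i then survival f m * u (\<tau> i - m) else 0)" for m i
  have "(\<lambda>i. b m i) \<longlonglongrightarrow> survival f m * L" for m
  proof (rule Lim_transform_eventually[OF tendsto_mult_left[OF lim]])
    show "\<forall>\<^sub>F i in sequentially. survival f m * u (\<tau> i - m) = b m i"
      unfolding eventually_sequentially b_def
      by (rule exI[of _ m]) (auto dest: order_trans[OF _ seq_suble[OF \<tau>]])
  qed
  moreover have "\<bar>b m i\<bar> \<le> survival f m * B" for m i
    unfolding b_def using survival_nn bound B by (auto simp: abs_mult intro: mult_left_mono)
  ultimately have "(\<lambda>i. \<Sum>m. b m i) \<longlonglongrightarrow> (\<Sum>m. survival f m * L)"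
    using summable_mult2[OF survival_summable] by (rule tannery_sequentially)
  moreover have "(\<Sum>m. b m i) = (\<Sum>j\<le>\<tau> i. q j)" for i
  proof -
    have "(\<Sum>m. b m i) = (\<Sum>m\<le>\<tau> i. b m i)" by (rule suminf_finite) (auto simp: b_def)
    thus ?thesis using conv by (simp add: b_def)
  qed
  moreover have "(\<lambda>n. \<Sum>j\<le>n. q j) \<longlonglongrightarrow> Q" using q_sums sums_def_le by blast
  from LIMSEQ_subseq_LIMSEQ[OF this \<tau>]
  have "(\<lambda>i. \<Sum>j\<le>\<tau> i. q j) \<longlonglongrightarrow> Q" by (simp add: o_def)
  ultimately have "(\<Sum>m. survival f m * L) = Q" using LIMSEQ_unique by auto
  thus ?thesis using suminf_mult2[OF survival_summable, of L] by (simp add: mult.commute)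
qed

lemma limsup_attained_by_subseq:
  fixes u :: "nat \<Rightarrow> real"
  assumes "\<And>n. \<bar>u n\<bar> \<le> B"
  obtains \<sigma> L where "strict_mono \<sigma>" "(\<lambda>i. u (\<sigma> i)) \<longlonglongrightarrow> L" "limsup u = ereal L"
    "\<And>\<tau> l. strict_mono \<tau> \<Longrightarrow> (\<lambda>i. u (\<tau> i)) \<longlonglongrightarrow> l \<Longrightarrow> l \<le> L"
proof -
  obtain \<sigma> where \<sigma>: "strict_mono \<sigma>" "((\<lambda>n. ereal (u n)) \<circ> \<sigma>) \<longlonglongrightarrow> limsup u"
    using limsup_subseq_lim by blast
  have "- B \<le> u n" "u n \<le> B" for n using assms[of n] by auto
  hence "limsup u \<le> ereal B" "ereal (- B) \<le> limsup u"
    by (auto intro!: tendsto_upperbound[OF \<sigma>(2)] tendsto_lowerbound[OF \<sigma>(2)])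
  then obtain L where L: "limsup u = ereal L" by (cases "limsup u") auto
  have "l \<le> L" if "strict_mono \<tau>" "(\<lambda>i. u (\<tau> i)) \<longlonglongrightarrow> l" for \<tau> l
  proof -
    have "limsup ((\<lambda>n. ereal (u n)) \<circ> \<tau>) = ereal l"
      using that(2) by (intro lim_imp_Limsup) (auto simp: o_def)
    thus ?thesis using limsup_subseq_mono[OF that(1), of "\<lambda>n. ereal (u n)"] L by simp
  qed
  moreover have "(\<lambda>i. u (\<sigma> i)) \<longlonglongrightarrow> L" using \<sigma>(2) unfolding L by (simp add: o_def)
  ultimately show ?thesis using that \<sigma>(1) L by blast
qed

lemma liminf_attained_by_subseq:
  fixes u :: "nat \<Rightarrow> real"
  assumes "\<And>n. \<bar>u n\<bar> \<le> B"
  obtains \<sigma> L where "strict_mono \<sigma>" "(\<lambda>i. u (\<sigma> i)) \<longlonglongrightarrow> L" "liminf u = ereal L"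
    "\<And>\<tau> l. strict_mono \<tau> \<Longrightarrow> (\<lambda>i. u (\<tau> i)) \<longlonglongrightarrow> l \<Longrightarrow> L \<le> l"
proof -
  obtain \<sigma> where \<sigma>: "strict_mono \<sigma>" "((\<lambda>n. ereal (u n)) \<circ> \<sigma>) \<longlonglongrightarrow> liminf u"
    using liminf_subseq_lim by blast
  have "- B \<le> u n" "u n \<le> B" for n using assms[of n] by auto
  hence "liminf u \<le> ereal B" "ereal (- B) \<le> liminf u"
    by (auto intro!: tendsto_upperbound[OF \<sigma>(2)] tendsto_lowerbound[OF \<sigma>(2)])
  then obtain L where L: "liminf u = ereal L" by (cases "liminf u") auto
  have "L \<le> l" if "strict_mono \<tau>" "(\<lambda>i. u (\<tau> i)) \<longlonglongrightarrow> l" for \<tau> l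
  proof -
    have "liminf ((\<lambda>n. ereal (u n)) \<circ> \<tau>) = ereal l"
      using that(2) by (intro lim_imp_Liminf) (auto simp: o_def)
    thus ?thesis using liminf_subseq_mono[OF that(1), of "\<lambda>n. ereal (u n)"] L by simp
  qed
  moreover have "(\<lambda>i. u (\<sigma> i)) \<longlonglongrightarrow> L" using \<sigma>(2) unfolding L by (simp add: o_def)
  ultimately show ?thesis using that \<sigma>(1) L by blast
qed

locale renewal_sequence =
  fixes f q u :: "nat \<Rightarrow> real" and Q :: real
  assumes f_nn: "\<And>m. f m \<ge> 0" and f_0: "f 0 = 0" and f_sums: "f sums 1"
    and f_eventually_pos: "\<forall>\<^sub>F m in sequentially. f m > 0"
    and survival_summable: "summable (survival f)"
    and q_nn: "\<And>n. q n \<ge> 0" and q_sums: "q sums Q"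
    and u_eq: "\<And>n. u n = q n + (\<Sum>j<n. f (Suc j) * u (n - Suc j))"
begin

lemma survival_nn: "survival f m \<ge> 0"
proof -
  have "(\<Sum>j\<le>m. f j) \<le> suminf f"
    using f_sums f_nn by (intro sum_le_suminf) (auto simp: sums_summable)
  thus ?thesis using f_sums unfolding survival_def by (simp add: sums_iff)
qed

lemma survival_0: "survival f 0 = 1"
  by (simp add: survival_def f_0)

lemma u_nn: "u n \<ge> 0"
proof (induction n rule: less_induct)
  case (less n)
  have "0 \<le> (\<Sum>j<n. f (Suc j) * u (n - Suc j))"
    using less f_nn by (intro sum_nonneg) auto
  thus ?case using u_eq[of n] q_nn[of n] by simp
qed

lemma survival_convolution: "(\<Sum>m\<le>n. survival f m * u (n - m)) = (\<Sum>j\<le>n. q j)"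
proof (induction n)
  case 0
  show ?case using u_eq[of 0] survival_0 by simp
next
  case (Suc n)
  have "(\<Sum>m\<le>Suc n. survival f m * u (Suc n - m))
      = u (Suc n) + (\<Sum>m\<le>n. survival f (Suc m) * u (n - m))"
    by (subst sum.atMost_Suc_shift) (simp add: survival_0)
  also have "(\<Sum>m\<le>n. survival f (Suc m) * u (n - m))
      = (\<Sum>m\<le>n. survival f m * u (n - m)) - (\<Sum>m\<le>n. f (Suc m) * u (n - m))"
    by (simp add: survival_def algebra_simps sum_subtractf sum.distrib)
  also have "(\<Sum>m\<le>n. f (Suc m) * u (n - m)) = u (Suc n) - q (Suc n)"
    using u_eq[of "Suc n"] by (simp add: lessThan_Suc_atMost)
  finally show ?case using Suc by simp
qed

lemma u_le: "u n \<le> Q"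
proof -
  have "survival f 0 * u (n - 0) \<le> (\<Sum>m\<le>n. survival f m * u (n - m))"
    using survival_nn u_nn by (intro member_le_sum) auto
  also have "\<dots> \<le> Q"
    unfolding survival_convolution using q_sums q_nn
    by (auto simp: sums_iff intro: sum_le_suminf)
  finally show ?thesis by (simp add: survival_0)
qed

lemma mean_ge_1: "(\<Sum>m. survival f m) \<ge> 1"
  using sum_le_suminf[OF survival_summable, of "{0}"] survival_nn by (simp add: survival_0)

text \<open>The core of the Erdos-Feller-Pollard argument: an extremal subsequential limit
  propagates, via the maximum principle, to all shifts of the subsequence.\<close>
lemma extremal_subseq_limit:
  assumes \<sigma>: "strict_mono \<sigma>" and lim: "(\<lambda>i. u (\<sigma> i)) \<longlonglongrightarrow> L"
    and extremal: "(\<forall>\<tau> l. strict_mono \<tau> \<longrightarrow> (\<lambda>i. u (\<tau> i)) \<longlonglongrightarrow> l \<longrightarrow> l \<le> L)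
                 \<or> (\<forall>\<tau> l. strict_mono \<tau> \<longrightarrow> (\<lambda>i. u (\<tau> i)) \<longlonglongrightarrow> l \<longrightarrow> L \<le> l)"
  shows "L = Q / (\<Sum>m. survival f m)"
proof -
  have bound: "\<bar>u n\<bar> \<le> Q" for n using u_nn u_le by simp
  obtain \<tau> Lm where \<tau>: "strict_mono \<tau>" and Lm: "\<And>m. (\<lambda>i. u (\<tau> i - m)) \<longlonglongrightarrow> Lm m"
    and "Lm 0 = L" and Lm_bound: "\<And>m. \<bar>Lm m\<bar> \<le> Q"
    using shifted_subseq_limits[OF bound \<sigma> lim] by blast
  have "summable f" "q \<longlonglongrightarrow> 0"
    using f_sums q_sums by (auto simp: sums_summable summable_LIMSEQ_zero)
  from shifted_limits_harmonic[OF f_nn this bound u_eq \<tau> Lm]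
  have "Lm m = (\<Sum>j. f (Suc j) * Lm (m + Suc j))" for m .
  moreover have "(\<forall>m. Lm m \<le> Lm 0) \<or> (\<forall>m. Lm 0 \<le> Lm m)"
    using extremal shifted_subseq_limit[OF \<tau> Lm] \<open>Lm 0 = L\<close> by blast
  ultimately have "Lm m = L" for m
    using harmonic_extremum_const[where h = Lm, OF f_nn f_0 f_sums f_eventually_pos Lm_bound]
      \<open>Lm 0 = L\<close>
    by blast
  hence "L * (\<Sum>m. survival f m) = Q"
    using survival_convolution_limit[OF survival_nn survival_summable q_sums bound
        survival_convolution \<tau>] Lm by simp
  thus ?thesis using mean_ge_1 by (simp add: field_simps)
qed

theorem renewal_theorem: "u \<longlonglongrightarrow> Q / (\<Sum>m. survival f m)"
proof (rule limsup_le_liminf_real)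
  have bound: "\<bar>u n\<bar> \<le> Q" for n using u_nn u_le by simp
  obtain \<sigma> L where \<sigma>: "strict_mono \<sigma>" "(\<lambda>i. u (\<sigma> i)) \<longlonglongrightarrow> L" and L: "limsup u = ereal L"
    and max: "\<And>\<tau> l. strict_mono \<tau> \<Longrightarrow> (\<lambda>i. u (\<tau> i)) \<longlonglongrightarrow> l \<Longrightarrow> l \<le> L"
    by (rule limsup_attained_by_subseq[of u, OF bound]) (rule that)
  have "L = Q / (\<Sum>m. survival f m)"
    using max by (intro extremal_subseq_limit[OF \<sigma>] disjI1) simp
  with L show "limsup u \<le> ereal (Q / (\<Sum>m. survival f m))" by simp
  obtain \<sigma>' L' where \<sigma>': "strict_mono \<sigma>'" "(\<lambda>i. u (\<sigma>' i)) \<longlonglongrightarrow> L'"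
    and L': "liminf u = ereal L'"
    and min: "\<And>\<tau> l. strict_mono \<tau> \<Longrightarrow> (\<lambda>i. u (\<tau> i)) \<longlonglongrightarrow> l \<Longrightarrow> L' \<le> l"
    by (rule liminf_attained_by_subseq[of u, OF bound]) (rule that)
  have "L' = Q / (\<Sum>m. survival f m)"
    using min by (intro extremal_subseq_limit[OF \<sigma>'] disjI2) simp
  with L' show "ereal (Q / (\<Sum>m. survival f m)) \<le> liminf u" by simp
qed

end

section \<open>Generating functions at the singularity\<close>

lemma sums_Suc_unique:
  fixes g :: "nat \<Rightarrow> real"
  assumes "(\<lambda>n. g (Suc n)) sums s" and "g sums S"
  shows "S = s + g 0"
  using assms by (metis sums_Suc_iff sums_unique2)

context cubic_root
begin

lemma scaled_count_bound:
  assumes "c \<le> 2^n"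
  shows "\<bar>(l^2)^n * real c\<bar> \<le> (2 * l^2)^n"
proof -
  have "(l^2)^n * real c \<le> (l^2)^n * 2^n"
    using assms by (intro mult_left_mono) (auto simp flip: of_nat_le_iff)
  thus ?thesis by (simp add: power_mult_distrib mult.commute)
qed

lemma summable_scaled_count:
  assumes "\<And>n. c n \<le> 2^n"
  shows "summable (\<lambda>n. (l^2)^n * real (c n))"
  by (rule summable_comparison_test[OF _ summable_geometric[of "2 * l^2"]])
     (use assms scaled_count_bound two_sq_lt_one in auto)

definition dyck_gf :: "nat \<Rightarrow> real" where
  "dyck_gf k = (\<Sum>n. (l^2)^n * real (dyck_count n k))"

definition dyck_total_gf :: real where
  "dyck_total_gf = (\<Sum>n. (l^2)^n * real (dyck_total n))"

lemma dyck_gf_sums: "(\<lambda>n. (l^2)^n * real (dyck_count n k)) sums dyck_gf k"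
  unfolding dyck_gf_def by (intro summable_sums summable_scaled_count dyck_count_le)

lemma dyck_total_gf_sums: "(\<lambda>n. (l^2)^n * real (dyck_total n)) sums dyck_total_gf"
  unfolding dyck_total_gf_def by (intro summable_sums summable_scaled_count dyck_total_le)

lemma dyck_gf_0: "dyck_gf 0 = 1 + l^2 * dyck_gf 1"
proof -
  have "(\<lambda>n. (l^2)^Suc n * real (dyck_count (Suc n) 0)) sums (l^2 * dyck_gf 1)"
    using sums_mult[OF dyck_gf_sums[of 1], of "l^2"] by (simp add: algebra_simps)
  from sums_Suc_unique[OF this dyck_gf_sums[of 0]] show ?thesis by simp
qed

lemma dyck_gf_Suc: "dyck_gf (Suc k) = l^2 * dyck_gf k * dyck_gf 0"
proof -
  define c where
    "c n = (\<Sum>a\<le>n. ((l^2)^a * real (dyck_count a k)) * ((l^2)^(n-a) * real (dyck_count (n-a) 0)))"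
    for n
  have "c sums (dyck_gf k * dyck_gf 0)"
    unfolding c_def dyck_gf_def
    by (rule Cauchy_product_sums)
       (auto simp: abs_mult intro: summable_scaled_count dyck_count_le)
  hence "(\<lambda>n. l^2 * c n) sums (l^2 * dyck_gf k * dyck_gf 0)"
    using sums_mult by (simp add: mult.assoc)
  moreover have "l^2 * c n = (l^2)^Suc n * real (dyck_count (Suc n) (Suc k))" for n
  proof -
    have "(l^2)^Suc n * real (dyck_count (Suc n) (Suc k))
        = l^2 * (\<Sum>a\<le>n. (l^2)^n * (real (dyck_count a k) * real (dyck_count (n-a) 0)))"
      by (simp only: dyck_count_Suc_Suc of_nat_sum of_nat_mult sum_distrib_left power_Suc mult.assoc)
    also have "\<dots> = l^2 * c n"
      unfolding c_def
    proof (intro arg_cong[where f = "(*) (l^2)"] sum.cong refl)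
      fix a assume "a \<in> {..n}"
      hence "(l^2)^n = (l^2)^a * (l^2)^(n-a)" by (simp flip: power_add)
      thus "(l^2)^n * (real (dyck_count a k) * real (dyck_count (n-a) 0))
          = (l^2)^a * real (dyck_count a k) * ((l^2)^(n-a) * real (dyck_count (n-a) 0))"
        by simp
    qed
    finally show ?thesis by (rule sym)
  qed
  ultimately have "(\<lambda>n. (l^2)^Suc n * real (dyck_count (Suc n) (Suc k)))
      sums (l^2 * dyck_gf k * dyck_gf 0)" by simp
  from sums_Suc_unique[OF this dyck_gf_sums[of "Suc k"]] show ?thesis by simp
qed

lemma dyck_gf_power: "dyck_gf k = (l^2 * dyck_gf 0)^k * dyck_gf 0"
  by (induction k) (simp_all add: dyck_gf_Suc algebra_simps)

lemma dyck_gf_0_ge_1: "dyck_gf 0 \<ge> 1"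
  using sum_le_suminf[OF sums_summable[OF dyck_gf_sums[of 0]], of "{0}"]
  unfolding dyck_gf_def by auto

lemma sum_dyck_gf_le: "(\<Sum>k\<le>K. dyck_gf k) \<le> dyck_total_gf"
proof -
  have "(\<Sum>k\<le>K. dyck_gf k) = (\<Sum>n. \<Sum>k\<le>K. (l^2)^n * real (dyck_count n k))"
    unfolding dyck_gf_def
    by (rule suminf_sum[symmetric]) (intro summable_scaled_count dyck_count_le)
  also have "\<dots> \<le> dyck_total_gf"
    unfolding dyck_total_gf_def
  proof (rule suminf_le)
    fix n
    have "(\<Sum>k\<le>K. dyck_count n k) \<le> (\<Sum>k\<le>max K n. dyck_count n k)" by (rule sum_mono2) auto
    also have "\<dots> = dyck_total n"
      unfolding dyck_total_def by (rule sum.mono_neutral_right) (auto simp: dyck_count_eq_0)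
    finally show "(\<Sum>k\<le>K. (l^2)^n * real (dyck_count n k)) \<le> (l^2)^n * real (dyck_total n)"
      by (simp flip: sum_distrib_left of_nat_sum add: mult_left_mono)
  qed (auto intro!: summable_sum summable_scaled_count dyck_count_le dyck_total_le)
  finally show ?thesis .
qed

lemma dyck_gf_ratio_lt_1: "l^2 * dyck_gf 0 < 1"
proof (rule ccontr)
  assume "\<not> l^2 * dyck_gf 0 < 1"
  hence "1 \<le> (l^2 * dyck_gf 0)^k" for k by (intro one_le_power) simp
  hence "1 * 1 \<le> dyck_gf k" for k
    unfolding dyck_gf_power[of k] using dyck_gf_0_ge_1 by (intro mult_mono) auto
  hence "dyck_gf k \<ge> 1" for k by simp
  hence "real (Suc K) \<le> dyck_total_gf" for K
    using sum_mono[of "{..K}" "\<lambda>_. 1" dyck_gf] sum_dyck_gf_le[of K] by simp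
  from this[of "nat \<lceil>dyck_total_gf\<rceil>"] show False
    using real_nat_ceiling_ge[of dyck_total_gf] by simp
qed

lemma dyck_gf_0_eq: "dyck_gf 0 = 1 / l"
proof -
  define t where "t = l^2 * dyck_gf 0"
  have "dyck_gf 1 = l^2 * dyck_gf 0 * dyck_gf 0" using dyck_gf_Suc[of 0] by simp
  moreover have "t = l^2 * (1 + l^2 * dyck_gf 1)" unfolding t_def by (subst dyck_gf_0) (rule refl)
  ultimately have "t = l^2 * (1 + l^2 * (l^2 * dyck_gf 0 * dyck_gf 0))" by simp
  also have "\<dots> = l^2 + l^2 * t^2"
    unfolding t_def by (simp add: algebra_simps power2_eq_square)
  finally have quadratic: "t = l^2 + l^2 * t^2" .
  have "(t - l) * (l^2 * t - l) = l^2 * t^2 - (l + l^3) * t + l^2"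
    by (simp add: algebra_simps power2_eq_square power3_eq_cube)
  also have "\<dots> = 0" using quadratic cube_eq by simp
  finally have "(t - l) * (l^2 * t - l) = 0" .
  moreover have "t \<ge> 0" unfolding t_def using dyck_gf_0_ge_1 by simp
  hence "l * t \<le> t" using lt_one by (simp add: mult_left_le_one_le pos less_imp_le)
  hence "l * t < 1" using dyck_gf_ratio_lt_1 unfolding t_def by simp
  hence "l^2 * t - l < 0" using pos by (simp add: power2_eq_square mult_strict_left_mono)
  ultimately have "t = l" by simp
  thus ?thesis unfolding t_def using pos by (simp add: field_simps power2_eq_square)
qed

lemma dyck_gf_eq: "dyck_gf k = l^k / l"
proof -
  have "l^2 * dyck_gf 0 = l" using dyck_gf_0_eq pos by (simp add: power2_eq_square)
  thus ?thesis using dyck_gf_power[of k] dyck_gf_0_eq by simp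
qed

lemma dyck_total_gf_eq: "dyck_total_gf = 1 / (l * (1 - l))"
proof -
  define h where "h n = (l^2)^n * real (dyck_total n)" for n
  define x where "x n = (l^2)^n * real (dyck_count n 0)" for n
  have "h (Suc n) = l^2 * (2 * h n - x n)" for n
  proof -
    have r: "real (dyck_total (Suc n)) = 2 * real (dyck_total n) - real (dyck_count n 0)"
      using arg_cong[OF dyck_total_Suc[of n], of real] by simp
    show ?thesis unfolding h_def x_def r by (simp add: algebra_simps)
  qed
  moreover have "(\<lambda>n. l^2 * (2 * h n - x n)) sums (l^2 * (2 * dyck_total_gf - dyck_gf 0))"
    unfolding h_def x_def by (intro sums_mult sums_diff dyck_total_gf_sums dyck_gf_sums)
  ultimately have "(\<lambda>n. h (Suc n)) sums (l^2 * (2 * dyck_total_gf - dyck_gf 0))" by simp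
  moreover have "h sums dyck_total_gf" "h 0 = 1"
    unfolding h_def using dyck_total_gf_sums by (simp_all add: dyck_total_def)
  ultimately have "dyck_total_gf = l^2 * (2 * dyck_total_gf - dyck_gf 0) + 1"
    using sums_Suc_unique by metis
  hence "dyck_total_gf * (1 - 2 * l^2) = 1 - l"
    using dyck_gf_0_eq pos by (simp add: algebra_simps power2_eq_square)
  moreover have "1 - 2 * l^2 = (1 - l) * (l * (1 - l))"
    using cube_eq by (simp add: algebra_simps power2_eq_square power3_eq_cube)
  ultimately have "(1 - l) * (dyck_total_gf * (l * (1 - l))) = (1 - l) * 1"
    by (simp add: mult_ac)
  hence "dyck_total_gf * (l * (1 - l)) = 1" using lt_one by simp
  thus ?thesis using lt_one pos by (simp add: field_simps)
qed

section \<open>The limit law\<close>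

text \<open>Law of the time of the first catastrophe when a path of length \<open>n\<close> has weight
  \<open>\<rho>\<^sub>0\<^sup>n = l^(2n)\<close>.\<close>
definition first_cat_law :: "nat \<Rightarrow> real" where
  "first_cat_law m = (if m = 0 then 0 else (l^2)^m * real (cat_ready_count (m - 1)))"

lemma first_cat_law_0: "first_cat_law 0 = 0"
  by (simp add: first_cat_law_def)

lemma first_cat_law_Suc: "first_cat_law (Suc j) = (l^2)^Suc j * real (cat_ready_count j)"
  by (simp add: first_cat_law_def)

lemma first_cat_law_nn: "first_cat_law m \<ge> 0"
  by (simp add: first_cat_law_def)

lemma first_cat_law_pos: "m \<ge> 3 \<Longrightarrow> first_cat_law m > 0"
proof -
  assume "m \<ge> 3"
  hence "dyck_count (m - 1) (m - 1) \<le> cat_ready_count (m - 1)"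
    unfolding cat_ready_count_def by (intro member_le_sum) auto
  thus ?thesis using \<open>m \<ge> 3\<close> pos by (simp add: first_cat_law_def dyck_count_diag)
qed

lemma first_cat_law_le: "first_cat_law m \<le> (2 * l^2)^m"
proof (cases m)
  case (Suc j)
  have "cat_ready_count j \<le> 2^m"
    using dyck_total_split[of j] dyck_total_le[of j] Suc by (simp add: le_trans)
  from scaled_count_bound[OF this] show ?thesis by (simp add: first_cat_law_def Suc)
qed (simp add: first_cat_law_def)

lemma first_cat_law_sums: "first_cat_law sums 1"
proof -
  have "(\<lambda>j. first_cat_law (Suc j))
      sums (l^2 * (dyck_total_gf - dyck_gf 0 - dyck_gf 1))"
  proof -
    have split: "real (cat_ready_count j)
        = real (dyck_total j) - real (dyck_count j 0) - real (dyck_count j 1)" for j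
      using arg_cong[OF dyck_total_split[of j], of real] by simp
    have "first_cat_law (Suc j) = l^2 * ((l^2)^j * real (dyck_total j)
        - (l^2)^j * real (dyck_count j 0) - (l^2)^j * real (dyck_count j 1))" for j
      unfolding first_cat_law_Suc split by (simp add: algebra_simps)
    thus ?thesis by (simp only:) (intro sums_mult sums_diff dyck_total_gf_sums dyck_gf_sums)
  qed
  moreover have "l^2 * (dyck_total_gf - dyck_gf 0 - dyck_gf 1) = 1"
  proof -
    have "l^2 * dyck_total_gf = l / (1 - l)"
      using pos unfolding dyck_total_gf_eq by (simp add: power2_eq_square)
    also have "\<dots> = 1 + l + l^2"
    proof -
      have "(1 + l + l^2) * (1 - l) = l"
        using cube_eq by (simp add: algebra_simps power2_eq_square power3_eq_cube)
      thus ?thesis using lt_one by (simp add: field_simps)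
    qed
    finally have "l^2 * dyck_total_gf = 1 + l + l^2" .
    thus ?thesis using pos by (simp add: dyck_gf_eq right_diff_distrib power2_eq_square)
  qed
  ultimately have "(\<lambda>j. first_cat_law (Suc j)) sums 1" by simp
  thus ?thesis by (simp add: sums_Suc_iff first_cat_law_0)
qed

lemma renewal_first_cat:
  assumes "\<And>n. a n = b n + (\<Sum>j<n. cat_ready_count j * a (n - Suc j))"
    and "(\<lambda>n. (l^2)^n * real (b n)) sums B"
  shows "renewal_sequence first_cat_law (\<lambda>n. (l^2)^n * real (b n)) (\<lambda>n. (l^2)^n * real (a n)) B"
proof
  show "first_cat_law 0 = 0" by (rule first_cat_law_0)
  show "\<forall>\<^sub>F m in sequentially. first_cat_law m > 0"
    using first_cat_law_pos eventually_sequentially by blast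
  show "summable (survival first_cat_law)"
    using first_cat_law_nn first_cat_law_sums first_cat_law_le two_sq_lt_one
    by (rule summable_survival_geometric)
  show "(l^2)^n * real (a n) = (l^2)^n * real (b n)
      + (\<Sum>j<n. first_cat_law (Suc j) * ((l^2)^(n - Suc j) * real (a (n - Suc j))))" for n
    unfolding first_cat_law_Suc by (rule scaled_renewal_eq) (rule assms(1))
qed (use first_cat_law_nn first_cat_law_sums assms(2) in auto)

theorem final_alt_prob_limit: "(\<lambda>n. final_alt_prob n k) \<longlonglongrightarrow> (1 - l) * l^k"
proof -
  have "\<And>n. cat_count n k
      = dyck_count n k + (\<Sum>j<n. cat_ready_count j * cat_count (n - Suc j) k)"
    using cat_count_first_cat unfolding after_cat_count_def .
  from renewal_first_cat[OF this dyck_gf_sums]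
  interpret count: renewal_sequence first_cat_law "\<lambda>n. (l^2)^n * real (dyck_count n k)"
      "\<lambda>n. (l^2)^n * real (cat_count n k)" "dyck_gf k" .
  from renewal_first_cat[OF cat_total_first_cat dyck_total_gf_sums]
  interpret total: renewal_sequence first_cat_law "\<lambda>n. (l^2)^n * real (dyck_total n)"
      "\<lambda>n. (l^2)^n * real (cat_total n)" dyck_total_gf .
  define \<mu> where "\<mu> = (\<Sum>m. survival first_cat_law m)"
  have "\<mu> \<ge> 1" unfolding \<mu>_def by (rule total.mean_ge_1)
  have "dyck_total_gf > 0" using pos lt_one by (simp add: dyck_total_gf_eq)
  have "(\<lambda>n. ((l^2)^n * real (cat_count n k)) / ((l^2)^n * real (cat_total n)))
      \<longlonglongrightarrow> (dyck_gf k / \<mu>) / (dyck_total_gf / \<mu>)"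
  proof (rule tendsto_divide)
    show "(\<lambda>n. (l^2)^n * real (cat_count n k)) \<longlonglongrightarrow> dyck_gf k / \<mu>"
      unfolding \<mu>_def by (rule count.renewal_theorem)
    show "(\<lambda>n. (l^2)^n * real (cat_total n)) \<longlonglongrightarrow> dyck_total_gf / \<mu>"
      unfolding \<mu>_def by (rule total.renewal_theorem)
    show "dyck_total_gf / \<mu> \<noteq> 0" using \<open>dyck_total_gf > 0\<close> \<open>\<mu> \<ge> 1\<close> by simp
  qed
  moreover have "((l^2)^n * real (cat_count n k)) / ((l^2)^n * real (cat_total n))
      = final_alt_prob n k" for n
    using pos by (simp add: final_alt_prob_eq)
  moreover have "(dyck_gf k / \<mu>) / (dyck_total_gf / \<mu>) = dyck_gf k / dyck_total_gf"
    using \<open>\<mu> \<ge> 1\<close> by simp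
  moreover have "dyck_gf k / dyck_total_gf = (1 - l) * l^k"
    using pos unfolding dyck_gf_eq dyck_total_gf_eq by simp
  ultimately show ?thesis by simp
qed

end

theorem corollary4p17:
  fixes lam :: real
  defines "lam \<equiv> root 3 (108 + 12 * sqrt 93) / 6 - 2 / root 3 (108 + 12 * sqrt 93)"
  shows "lam > 0 \<and> lam^3 + lam - 1 = 0
         \<and> (\<forall>x::real. x > 0 \<and> x^3 + x - 1 = 0 \<longrightarrow> x = lam)
         \<and> lam = inverse (v1 rho0)
         \<and> (\<forall>k::nat. (\<lambda>n. final_alt_prob n k) \<longlonglongrightarrow> (1 - lam) * lam^k)"
proof -
  interpret cubic_root lam
    using cardano_root unfolding lam_def by unfold_locales
  show ?thesis
    using pos cubic cubic_root_unique[OF _ pos _ cubic] inverse_v1_rho0[symmetric]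
      final_alt_prob_limit
    by blast
qed

end
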